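(* Consider a hyperbolic triangle with vertices $v_i,v_j,v_k$, carrying circles of radii $r_i,r_j,r_k>0$ centered at the vertices, with inversive distances $a=I_{jk}$, $b=I_{ki}$, $c=I_{ij}$, all $>1$, so that the edge lengths are $l_{jk}=\operatorname{arccosh}(\cosh r_j\cosh r_k+a\sinh r_j\sinh r_k)$, etc. Suppose these three lengths satisfy the strict triangle inequalities and the orthogonal circle of the face is compact, with hyperbolic radius $\rho_{ijk}>0$. Then $\Xi_{ijk}>0$ and $$\sinh r_i\sinh r_j\sinh r_k\sqrt{\Delta_{abc}}=\tanh\rho_{ijk}\sqrt{1+2xyz-x^2-y^2-z^2}=\sinh\rho_{ijk}\sqrt{\Xi_{ijk}}.$$
   Context: Notation: $p=\cosh r_i$, $q=\cosh r_j$, $r=\cosh r_k$, $x=\cosh l_{jk}$, $y=\cosh l_{ki}$, $z=\cosh l_{ij}$. The discriminant of inversive distance is $\Delta_{abc}=a^2+b^2+c^2+2abc-1$. The discriminant of compactness is $$\Xi_{ijk}=p^2(1-x^2)+q^2(1-y^2)+r^2(1-z^2)+2pq(xy-z)+2pr(xz-y)+2qr(yz-x).$$ Orthogonal circle: embed the triangle isometrically in the Poincaré disk $\mathbb D\subset\mathbb R^2$; the three hyperbolic vertex circles become disjoint Euclidean circles, and the orthogonal circle is the unique Euclidean circle orthogonal to all three. It is called compact if it lies in the open disk $\mathbb D$; then it is a hyperbolic circle with center $O_{ijk}$ and hyperbolic radius $\rho_{ijk}$, satisfying $\cosh d(O_{ijk},v_\alpha)=\cosh r_\alpha\cosh\rho_{ijk}$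 for $\alpha=i,j,k$. *)

theory Defs
  imports "HOL-Analysis.Analysis"
begin

text \<open>Poincare disk model: points are complex numbers z with cmod z < 1.
  Hyperbolic distance via cosh d(z,w) = 1 + 2|z-w|^2/((1-|z|^2)(1-|w|^2)).\<close>
definition pdist :: "complex \<Rightarrow> complex \<Rightarrow> real" where
  "pdist z w = arcosh (1 + 2 * (cmod (z - w))\<^sup>2 / ((1 - (cmod z)\<^sup>2) * (1 - (cmod w)\<^sup>2)))"

definition hcircle :: "complex \<Rightarrow> real \<Rightarrow> complex set" where
  "hcircle c r = {z. cmod z < 1 \<and> pdist c z = r}"

definition orth_circles :: "complex \<Rightarrow> real \<Rightarrow> complex \<Rightarrow> real \<Rightarrow> bool" where
  "orth_circles C1 R1 C2 R2 \<longleftrightarrow> (cmod (C1 - C2))\<^sup>2 = R1\<^sup>2 + R2\<^sup>2"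

definition Delta_disc :: "real \<Rightarrow> real \<Rightarrow> real \<Rightarrow> real" where
  "Delta_disc a b c = a\<^sup>2 + b\<^sup>2 + c\<^sup>2 + 2*a*b*c - 1"

definition Xi_disc :: "real \<Rightarrow> real \<Rightarrow> real \<Rightarrow> real \<Rightarrow> real \<Rightarrow> real \<Rightarrow> real" where
  "Xi_disc p q r x y z = p\<^sup>2 * (1 - x\<^sup>2) + q\<^sup>2 * (1 - y\<^sup>2) + r\<^sup>2 * (1 - z\<^sup>2)
     + 2*p*q*(x*y - z) + 2*p*r*(x*z - y) + 2*q*r*(y*z - x)"

end

theory Submission
  imports Defs
begin

text \<open>Lift the Poincare disk to the hyperboloid model, where the hyperbolic cosine of a
  distance becomes the Minkowski form of the lifts. Orthogonality of the Euclidean circles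
  translates into \<open>cosh d(O, v\<^sub>\<alpha>) = cosh r\<^sub>\<alpha> cosh \<rho>\<close>. Four vectors in
  three-dimensional Minkowski space have vanishing Gram determinant, and for the lifts of
  \<open>v\<^sub>i, v\<^sub>j, v\<^sub>k, O\<close> this reads
  \<open>1 + 2xyz - x\<^sup>2 - y\<^sup>2 - z\<^sup>2 = cosh\<^sup>2 \<rho> \<cdot> \<Xi>\<close>. The triangle
  inequalities make the left side positive, and inserting the inversive distance formulas for
  \<open>x, y, z\<close> gives \<open>(1 + 2xyz - x\<^sup>2 - y\<^sup>2 - z\<^sup>2) - \<Xi> =
  (sinh r\<^sub>i sinh r\<^sub>j sinh r\<^sub>k)\<^sup>2 \<Delta>\<close>; together these give both equalities.\<close>

fun minkowski :: "real \<times> real \<times> real \<Rightarrow> real \<times> real \<times> real \<Rightarrow> real" where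
  "minkowski (a0, a1, a2) (b0, b1, b2) = a0 * b0 - a1 * b1 - a2 * b2"

text \<open>The Gram determinant of four vectors in a three-dimensional space vanishes; this is its
  expansion along the row of \<open>s\<close>.\<close>
lemma minkowski_gram_det_4:
  "(minkowski u u * minkowski v v * minkowski w w + 2 * minkowski u v * minkowski v w * minkowski w u
      - minkowski u u * (minkowski v w)\<^sup>2 - minkowski v v * (minkowski w u)\<^sup>2
      - minkowski w w * (minkowski u v)\<^sup>2) * minkowski s s
   = (minkowski s u)\<^sup>2 * (minkowski v v * minkowski w w - (minkowski v w)\<^sup>2)
     + (minkowski s v)\<^sup>2 * (minkowski w w * minkowski u u - (minkowski w u)\<^sup>2)
     + (minkowski s w)\<^sup>2 * (minkowski u u * minkowski v v - (minkowski u v)\<^sup>2)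
     + 2 * minkowski s u * minkowski s v * (minkowski v w * minkowski w u - minkowski u v * minkowski w w)
     + 2 * minkowski s u * minkowski s w * (minkowski u v * minkowski v w - minkowski w u * minkowski v v)
     + 2 * minkowski s v * minkowski s w * (minkowski u v * minkowski w u - minkowski v w * minkowski u u)"
proof -
  obtain u0 u1 u2 v0 v1 v2 w0 w1 w2 s0 s1 s2 where coords:
    "u = (u0, u1, u2)" "v = (v0, v1, v2)" "w = (w0, w1, w2)" "s = (s0, s1, s2)"
    by (metis prod.exhaust)
  show ?thesis unfolding coords minkowski.simps by algebra
qed

lemma minkowski_gram_relation:
  assumes "minkowski u u = 1" "minkowski v v = 1" "minkowski w w = 1" "minkowski s s = 1"
    and "minkowski v w = x" "minkowski w u = y" "minkowski u v = z"
    and "minkowski s u = p * L" "minkowski s v = q * L" "minkowski s w = r * L"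
  shows "1 + 2*x*y*z - x\<^sup>2 - y\<^sup>2 - z\<^sup>2 = L\<^sup>2 * Xi_disc p q r x y z"
  using minkowski_gram_det_4[of u v w s] unfolding assms Xi_disc_def
  by (simp add: algebra_simps power2_eq_square)

lemma inversive_discriminant_identity:
  fixes p q r si sj sk a b c :: real
  assumes "p\<^sup>2 = 1 + si\<^sup>2" "q\<^sup>2 = 1 + sj\<^sup>2" "r\<^sup>2 = 1 + sk\<^sup>2"
    and "x = q*r + a * sj * sk" "y = r*p + b * sk * si" "z = p*q + c * si * sj"
  shows "(1 + 2*x*y*z - x\<^sup>2 - y\<^sup>2 - z\<^sup>2) - Xi_disc p q r x y z = (si * sj * sk)\<^sup>2 * Delta_disc a b c"
  unfolding Xi_disc_def Delta_disc_def assms(4-6) using assms(1-3) by algebra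

lemma cosh_triangle_discriminant_pos:
  fixes A B C :: real
  assumes "C < A + B" "A < B + C" "B < A + C"
  shows "1 + 2 * cosh A * cosh B * cosh C - (cosh A)\<^sup>2 - (cosh B)\<^sup>2 - (cosh C)\<^sup>2 > 0"
proof -
  have "cosh C < cosh (A + B)" using assms by (subst cosh_real_nonneg_less_iff) auto
  moreover have "cosh (A - B) < cosh C"
    using assms cosh_real_nonneg_less_iff[of "\<bar>A - B\<bar>" C] by simp
  moreover have "1 + 2 * cosh A * cosh B * cosh C - (cosh A)\<^sup>2 - (cosh B)\<^sup>2 - (cosh C)\<^sup>2
      = (cosh (A + B) - cosh C) * (cosh C - cosh (A - B))"
    unfolding cosh_add cosh_diff using cosh_square_eq[of A] cosh_square_eq[of B] by algebra
  ultimately show ?thesis by simp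
qed

lemma cosh_arcosh_inversive:
  fixes a s t :: real
  assumes "a > 1" "s > 0" "t > 0"
  shows "cosh (arcosh (cosh s * cosh t + a * sinh s * sinh t)) = cosh s * cosh t + a * sinh s * sinh t"
proof -
  have "1 \<le> cosh s * cosh t"
    using mult_mono[OF cosh_real_ge_1[of s] cosh_real_ge_1[of t]] by simp
  moreover have "a * sinh s * sinh t > 0" using assms by simp
  ultimately show ?thesis by simp
qed

lemma tanh_sinh_discriminant_identities:
  fixes \<rho> S D X \<Delta> :: real
  assumes "\<rho> > 0" "S > 0" "D > 0" and gram: "D = (cosh \<rho>)\<^sup>2 * X" and diff: "D - X = S\<^sup>2 * \<Delta>"
  shows "X > 0 \<and> S * sqrt \<Delta> = tanh \<rho> * sqrt D \<and> tanh \<rho> * sqrt D = sinh \<rho> * sqrt X"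
proof -
  have "(cosh \<rho>)\<^sup>2 > 0" by (simp add: cosh_real_pos)
  then have X: "X = D / (cosh \<rho>)\<^sup>2" using gram by simp
  have "S\<^sup>2 * \<Delta> = (tanh \<rho>)\<^sup>2 * D"
    unfolding diff[symmetric] X tanh_def power_divide using \<open>(cosh \<rho>)\<^sup>2 > 0\<close> cosh_square_eq[of \<rho>]
    by (simp add: field_simps)
  then have "S * sqrt \<Delta> = tanh \<rho> * sqrt D"
    using assms by (metis real_sqrt_abs real_sqrt_mult abs_of_pos tanh_real_pos_iff)
  moreover have "tanh \<rho> * sqrt D = sinh \<rho> * sqrt X"
    unfolding X tanh_def by (simp add: real_sqrt_divide cosh_real_pos)
  ultimately show ?thesis using X \<open>D > 0\<close> \<open>(cosh \<rho>)\<^sup>2 > 0\<close> by simp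
qed

lemma cosh_pdist:
  assumes "cmod z < 1" "cmod w < 1"
  shows "cosh (pdist z w) = 1 + 2 * (cmod (z - w))\<^sup>2 / ((1 - (cmod z)\<^sup>2) * (1 - (cmod w)\<^sup>2))"
proof -
  have "(cmod z)\<^sup>2 < 1" "(cmod w)\<^sup>2 < 1"
    using assms by (simp_all add: abs_square_less_1)
  then show ?thesis unfolding pdist_def by simp
qed

lemma circle_in_quadric:
  fixes t v1 v2 c1 c2 R :: real
  assumes "R > 0"
    and on_quadric: "\<And>z1 z2. (z1 - c1)\<^sup>2 + (z2 - c2)\<^sup>2 = R\<^sup>2 \<Longrightarrow> t * (1 - z1\<^sup>2 - z2\<^sup>2) = (v1 - z1)\<^sup>2 + (v2 - z2)\<^sup>2"
  shows "(1 + t) * c1 = v1" "(1 + t) * c2 = v2" "(1 + t)\<^sup>2 * R\<^sup>2 = t * (1 + t - (v1\<^sup>2 + v2\<^sup>2))"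
proof -
  have right: "t * (1 - (c1 + R)\<^sup>2 - c2\<^sup>2) = (v1 - (c1 + R))\<^sup>2 + (v2 - c2)\<^sup>2" by (rule on_quadric) simp
  have left: "t * (1 - (c1 - R)\<^sup>2 - c2\<^sup>2) = (v1 - (c1 - R))\<^sup>2 + (v2 - c2)\<^sup>2" by (rule on_quadric) simp
  have top: "t * (1 - c1\<^sup>2 - (c2 + R)\<^sup>2) = (v1 - c1)\<^sup>2 + (v2 - (c2 + R))\<^sup>2" by (rule on_quadric) simp
  have bottom: "t * (1 - c1\<^sup>2 - (c2 - R)\<^sup>2) = (v1 - c1)\<^sup>2 + (v2 - (c2 - R))\<^sup>2" by (rule on_quadric) simp
  have "R * (v1 - (1 + t) * c1) = 0" using right left by algebra
  then show c1: "(1 + t) * c1 = v1" using \<open>R > 0\<close> by simp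
  have "R * (v2 - (1 + t) * c2) = 0" using top bottom by algebra
  then show c2: "(1 + t) * c2 = v2" using \<open>R > 0\<close> by simp
  show "(1 + t)\<^sup>2 * R\<^sup>2 = t * (1 + t - (v1\<^sup>2 + v2\<^sup>2))" using right left c1 c2 by algebra
qed

text \<open>The hyperbolic circle of center \<open>v\<close> and radius \<open>r\<close> is the Euclidean circle
  \<open>t (1 - |z|\<^sup>2) = |v - z|\<^sup>2\<close>, which determines its Euclidean center and radius.\<close>
lemma hcircle_euclidean_center_radius:
  assumes v: "cmod v < 1" and "R > 0" and sphere: "sphere C R \<subseteq> hcircle v r"
  defines "t \<equiv> (cosh r - 1) * (1 - (cmod v)\<^sup>2) / 2"
  shows "(1 + t) * Re C = Re v" "(1 + t) * Im C = Im v"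
    "(1 + t)\<^sup>2 * R\<^sup>2 = t * (1 + t - (cmod v)\<^sup>2)"
proof -
  have "t * (1 - z1\<^sup>2 - z2\<^sup>2) = (Re v - z1)\<^sup>2 + (Im v - z2)\<^sup>2"
    if "(z1 - Re C)\<^sup>2 + (z2 - Im C)\<^sup>2 = R\<^sup>2" for z1 z2
  proof -
    define z where "z = Complex z1 z2"
    have "(cmod (C - z))\<^sup>2 = R\<^sup>2"
      using that by (simp add: z_def cmod_power2 power2_commute)
    then have "dist C z = R"
      using \<open>R > 0\<close> by (simp add: dist_norm power2_eq_iff_nonneg)
    then have z: "cmod z < 1" and "pdist v z = r" using sphere by (auto simp: hcircle_def)
    then have "cosh r - 1 = 2 * (cmod (v - z))\<^sup>2 / ((1 - (cmod v)\<^sup>2) * (1 - (cmod z)\<^sup>2))"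
      using cosh_pdist[OF v z] by simp
    moreover have "(1 - (cmod v)\<^sup>2) * (1 - (cmod z)\<^sup>2) > 0"
      using v z by (simp add: abs_square_less_1)
    ultimately have "t * (1 - (cmod z)\<^sup>2) = (cmod (v - z))\<^sup>2"
      unfolding t_def by (simp add: field_simps)
    then show ?thesis by (simp add: z_def cmod_power2 diff_diff_eq)
  qed
  from circle_in_quadric[OF \<open>R > 0\<close> this]
  show "(1 + t) * Re C = Re v" "(1 + t) * Im C = Im v"
    "(1 + t)\<^sup>2 * R\<^sup>2 = t * (1 + t - (cmod v)\<^sup>2)"
    by (simp_all add: cmod_power2)
qed

lemma orthogonal_hcircles_cosh_pdist:
  assumes v: "cmod v < 1" and Q: "cmod Q < 1" and "R\<^sub>v > 0" "R > 0"
    and "sphere C\<^sub>v R\<^sub>v \<subseteq> hcircle v r" "sphere C R \<subseteq> hcircle Q \<rho>"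
    and "orth_circles C R C\<^sub>v R\<^sub>v"
  shows "cosh (pdist Q v) = cosh \<rho> * cosh r"
proof -
  define t where "t = (cosh r - 1) * (1 - (cmod v)\<^sup>2) / 2"
  define s where "s = (cosh \<rho> - 1) * (1 - (cmod Q)\<^sup>2) / 2"
  have t: "(1 + t) * Re C\<^sub>v = Re v" "(1 + t) * Im C\<^sub>v = Im v" "(1 + t)\<^sup>2 * R\<^sub>v\<^sup>2 = t * (1 + t - (cmod v)\<^sup>2)"
    unfolding t_def by (rule hcircle_euclidean_center_radius; fact)+
  have s: "(1 + s) * Re C = Re Q" "(1 + s) * Im C = Im Q" "(1 + s)\<^sup>2 * R\<^sup>2 = s * (1 + s - (cmod Q)\<^sup>2)"
    unfolding s_def by (rule hcircle_euclidean_center_radius; fact)+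
  have orth: "(Re C - Re C\<^sub>v)\<^sup>2 + (Im C - Im C\<^sub>v)\<^sup>2 = R\<^sup>2 + R\<^sub>v\<^sup>2"
    using \<open>orth_circles C R C\<^sub>v R\<^sub>v\<close> by (simp add: orth_circles_def cmod_power2)
  have v2: "(cmod v)\<^sup>2 < 1" and Q2: "(cmod Q)\<^sup>2 < 1" using v Q by (simp_all add: abs_square_less_1)
  have "t \<ge> 0" "s \<ge> 0" using v2 Q2 cosh_real_ge_1[of r] cosh_real_ge_1[of \<rho>]
    by (simp_all add: t_def s_def)
  have "((1 + s) * (1 + t))\<^sup>2 * (R\<^sup>2 + R\<^sub>v\<^sup>2)
      = ((1 + s) * (1 + t) * (Re C - Re C\<^sub>v))\<^sup>2 + ((1 + s) * (1 + t) * (Im C - Im C\<^sub>v))\<^sup>2"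
    unfolding orth[symmetric] by algebra
  also have "\<dots> = ((1 + t) * Re Q - (1 + s) * Re v)\<^sup>2 + ((1 + t) * Im Q - (1 + s) * Im v)\<^sup>2"
    unfolding t(1,2)[symmetric] s(1,2)[symmetric] by (simp add: algebra_simps)
  finally have "(1 + s) * (1 + t) * (2 * (Re Q * Re v + Im Q * Im v) - (1 + t) * ((cmod Q)\<^sup>2 - s) - (1 + s) * ((cmod v)\<^sup>2 - t)) = 0"
    using t(3) s(3) unfolding cmod_power2 by algebra
  then have inner: "2 * (Re Q * Re v + Im Q * Im v) = (1 + t) * ((cmod Q)\<^sup>2 - s) + (1 + s) * ((cmod v)\<^sup>2 - t)"
    using \<open>t \<ge> 0\<close> \<open>s \<ge> 0\<close> by simp
  have "2 * (cmod (Q - v))\<^sup>2 = (cosh \<rho> * cosh r - 1) * ((1 - (cmod Q)\<^sup>2) * (1 - (cmod v)\<^sup>2))"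
    using inner t_def s_def unfolding cmod_power2 by (simp add: field_simps) algebra
  moreover have "(1 - (cmod Q)\<^sup>2) * (1 - (cmod v)\<^sup>2) \<noteq> 0" using v2 Q2 by simp
  ultimately show ?thesis unfolding cosh_pdist[OF Q v] by (simp add: divide_simps)
qed

definition hyperboloid_lift :: "complex \<Rightarrow> real \<times> real \<times> real" where
  "hyperboloid_lift z =
     ((1 + (cmod z)\<^sup>2) / (1 - (cmod z)\<^sup>2), 2 * Re z / (1 - (cmod z)\<^sup>2), 2 * Im z / (1 - (cmod z)\<^sup>2))"

lemma cosh_pdist_minkowski:
  assumes "cmod z < 1" "cmod w < 1"
  shows "cosh (pdist z w) = minkowski (hyperboloid_lift z) (hyperboloid_lift w)"
proof -
  have "(cmod z)\<^sup>2 < 1" "(cmod w)\<^sup>2 < 1"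
    using assms by (simp_all add: abs_square_less_1)
  then have "1 - (cmod z)\<^sup>2 \<noteq> 0" "1 - (cmod w)\<^sup>2 \<noteq> 0" by simp_all
  then show ?thesis
    unfolding cosh_pdist[OF assms] hyperboloid_lift_def minkowski.simps
    by (simp add: divide_simps cmod_power2) algebra
qed

lemma minkowski_hyperboloid_lift_self:
  "cmod z < 1 \<Longrightarrow> minkowski (hyperboloid_lift z) (hyperboloid_lift z) = 1"
  using cosh_pdist_minkowski[of z z] cosh_pdist[of z z] by simp

theorem mainTheorem2:
  fixes ri rj rk a b c \<rho> Ri Rj Rk R :: real
    and vi vj vk Ci Cj Ck C Oc :: complex
  assumes "ri > 0" "rj > 0" "rk > 0" "a > 1" "b > 1" "c > 1"
  defines "ljk \<equiv> arcosh (cosh rj * cosh rk + a * sinh rj * sinh rk)"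
    and "lki \<equiv> arcosh (cosh rk * cosh ri + b * sinh rk * sinh ri)"
    and "lij \<equiv> arcosh (cosh ri * cosh rj + c * sinh ri * sinh rj)"
  assumes "ljk < lki + lij" "lki < ljk + lij" "lij < ljk + lki"
    and "cmod vi < 1" "cmod vj < 1" "cmod vk < 1"
    and "pdist vj vk = ljk" "pdist vk vi = lki" "pdist vi vj = lij"
    and "Ri > 0" "hcircle vi ri = sphere Ci Ri"
    and "Rj > 0" "hcircle vj rj = sphere Cj Rj"
    and "Rk > 0" "hcircle vk rk = sphere Ck Rk"
    and "R > 0" "orth_circles C R Ci Ri" "orth_circles C R Cj Rj" "orth_circles C R Ck Rk"
    and "sphere C R \<subseteq> ball 0 1"
    and "\<rho> > 0" "cmod Oc < 1" "sphere C R = hcircle Oc \<rho>"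
  defines "p \<equiv> cosh ri" and "q \<equiv> cosh rj" and "r \<equiv> cosh rk"
    and "x \<equiv> cosh ljk" and "y \<equiv> cosh lki" and "z \<equiv> cosh lij"
  shows "Xi_disc p q r x y z > 0
    \<and> sinh ri * sinh rj * sinh rk * sqrt (Delta_disc a b c)
        = tanh \<rho> * sqrt (1 + 2*x*y*z - x\<^sup>2 - y\<^sup>2 - z\<^sup>2)
    \<and> tanh \<rho> * sqrt (1 + 2*x*y*z - x\<^sup>2 - y\<^sup>2 - z\<^sup>2)
        = sinh \<rho> * sqrt (Xi_disc p q r x y z)"
proof (rule tanh_sinh_discriminant_identities)
  let ?lift = hyperboloid_lift
  have cosh_dist_center: "minkowski (?lift Oc) (?lift v) = cosh r\<^sub>v * cosh \<rho>"
    if "cmod v < 1" "R\<^sub>v > 0" "hcircle v r\<^sub>v = sphere C\<^sub>v R\<^sub>v" "orth_circles C R C\<^sub>v R\<^sub>v" for v r\<^sub>v C\<^sub>v R\<^sub>v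
    using orthogonal_hcircles_cosh_pdist[of v Oc R\<^sub>v R C\<^sub>v r\<^sub>v C \<rho>] that
      cosh_pdist_minkowski[OF \<open>cmod Oc < 1\<close> \<open>cmod v < 1\<close>]
      \<open>cmod Oc < 1\<close> \<open>R > 0\<close> \<open>sphere C R = hcircle Oc \<rho>\<close> by simp
  have edges: "x = q * r + a * sinh rj * sinh rk" "y = r * p + b * sinh rk * sinh ri"
    "z = p * q + c * sinh ri * sinh rj"
    unfolding x_def y_def z_def ljk_def lki_def lij_def p_def q_def r_def
    using assms(1-6) by (simp_all add: cosh_arcosh_inversive)
  have "minkowski (?lift Oc) (?lift vi) = p * cosh \<rho>" "minkowski (?lift Oc) (?lift vj) = q * cosh \<rho>"
    "minkowski (?lift Oc) (?lift vk) = r * cosh \<rho>"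
    unfolding p_def q_def r_def by (rule cosh_dist_center; fact)+
  moreover have "minkowski (?lift vj) (?lift vk) = x" "minkowski (?lift vk) (?lift vi) = y"
    "minkowski (?lift vi) (?lift vj) = z"
    unfolding x_def y_def z_def
      \<open>pdist vj vk = ljk\<close>[symmetric] \<open>pdist vk vi = lki\<close>[symmetric] \<open>pdist vi vj = lij\<close>[symmetric]
    using \<open>cmod vi < 1\<close> \<open>cmod vj < 1\<close> \<open>cmod vk < 1\<close> by (simp_all add: cosh_pdist_minkowski)
  ultimately show "1 + 2*x*y*z - x\<^sup>2 - y\<^sup>2 - z\<^sup>2 = (cosh \<rho>)\<^sup>2 * Xi_disc p q r x y z"
    using \<open>cmod vi < 1\<close> \<open>cmod vj < 1\<close> \<open>cmod vk < 1\<close> \<open>cmod Oc < 1\<close>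
    by (intro minkowski_gram_relation) (simp_all add: minkowski_hyperboloid_lift_self)
  show "1 + 2*x*y*z - x\<^sup>2 - y\<^sup>2 - z\<^sup>2 - Xi_disc p q r x y z
      = (sinh ri * sinh rj * sinh rk)\<^sup>2 * Delta_disc a b c"
    using edges unfolding p_def q_def r_def
    by (intro inversive_discriminant_identity) (simp_all add: cosh_square_eq)
  show "1 + 2*x*y*z - x\<^sup>2 - y\<^sup>2 - z\<^sup>2 > 0"
    using cosh_triangle_discriminant_pos[of lij ljk lki] \<open>ljk < lki + lij\<close> \<open>lki < ljk + lij\<close> \<open>lij < ljk + lki\<close>
    unfolding x_def y_def z_def by (simp add: algebra_simps)
  show "\<rho> > 0" "sinh ri * sinh rj * sinh rk > 0" using \<open>\<rho> > 0\<close> \<open>ri > 0\<close> \<open>rj > 0\<close> \<open>rk > 0\<close> by simp_all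
qed

end
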